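(* Let $(Q,\cdot)$ be a Ward quasigroup with $xx=e$ for all $x\in Q$, and let $\mathrm{ret}(Q,\cdot,e)=(Q,\circ)$ denote the group with $x\circ y=x\cdot(e\cdot y)$. (a) If $(Q,\cdot,\diamond)$ is a double magma for some magma $(Q,\diamond)$ having a unit $1$ (i.e. $1\diamond x=x\diamond 1=x$ for all $x$), then $x\diamond y=x\cdot(e\cdot y)$ for all $x,y$ (so $(Q,\diamond)=\mathrm{ret}(Q,\cdot,e)$) and $(Q,\cdot)$ is medial. (b) If $(Q,\cdot)$ is medial and $(Q,\circ,\star)$ is a double magma for some left cancellative magma $(Q,\star)$ which is unipotent (i.e. $x\star x=y\star y$ for all $x,y$) and contains a right unit $r$ (i.e. $x\star r=x$ for all $x$), then the operations $\cdot$ and $\star$ coincide.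
   Context: A Ward quasigroup is a quasigroup $(Q,\cdot)$ satisfying $(xz)(yz)=xy$ for all $x,y,z$; there is $e$ with $xx=e$ for all $x$, and $x\circ y=x\cdot(e\cdot y)$ defines a group with identity $e$. A triple $(Q,\ast,\star)$ is a double magma if $(x\ast y)\star(z\ast w)=(x\star z)\ast(y\star w)$ for all $x,y,z,w$. A magma is medial if $(xy)(zw)=(xz)(yw)$ for all $x,y,z,w$; left cancellative if $ax=ay$ implies $x=y$. *)

theory Defs
  imports Main
begin

definition quasigroup :: "('a \<Rightarrow> 'a \<Rightarrow> 'a) \<Rightarrow> bool" where
  "quasigroup m \<longleftrightarrow> (\<forall>a b. (\<exists>!x. m a x = b) \<and> (\<exists>!y. m y a = b))"

definition ward_quasigroup :: "('a \<Rightarrow> 'a \<Rightarrow> 'a) \<Rightarrow> bool" where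
  "ward_quasigroup m \<longleftrightarrow> quasigroup m \<and> (\<forall>x y z. m (m x z) (m y z) = m x y)"

definition double_magma :: "('a \<Rightarrow> 'a \<Rightarrow> 'a) \<Rightarrow> ('a \<Rightarrow> 'a \<Rightarrow> 'a) \<Rightarrow> bool" where
  "double_magma ast star \<longleftrightarrow>
     (\<forall>x y z w. star (ast x y) (ast z w) = ast (star x z) (star y w))"

definition medial :: "('a \<Rightarrow> 'a \<Rightarrow> 'a) \<Rightarrow> bool" where
  "medial m \<longleftrightarrow> (\<forall>x y z w. m (m x y) (m z w) = m (m x z) (m y w))"

definition left_cancellative :: "('a \<Rightarrow> 'a \<Rightarrow> 'a) \<Rightarrow> bool" where
  "left_cancellative m \<longleftrightarrow> (\<forall>a x y. m a x = m a y \<longrightarrow> x = y)"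

definition unipotent :: "('a \<Rightarrow> 'a \<Rightarrow> 'a) \<Rightarrow> bool" where
  "unipotent m \<longleftrightarrow> (\<forall>x y. m x x = m y y)"

definition ret :: "('a \<Rightarrow> 'a \<Rightarrow> 'a) \<Rightarrow> 'a \<Rightarrow> 'a \<Rightarrow> 'a \<Rightarrow> 'a" where
  "ret m e x y = m x (m e y)"

end

theory Submission
  imports Defs
begin

text \<open>
  Every element of a Ward quasigroup is a product, so the law \<open>(xz)(yz) = xy\<close>
  gives \<open>ae = a\<close>, \<open>e(yx) = xy\<close> and \<open>e(ea) = a\<close>; in particular left multiplication
  by \<open>e\<close> is the inversion of \<open>ret(Q,\<cdot>,e)\<close>.
  (a) Interchanging a unital \<open>\<diamond>\<close> with \<open>\<cdot>\<close> in the Eckmann--Hilton manner forces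
  the unit of \<open>\<diamond>\<close> to be \<open>e\<close>, \<open>x \<diamond> y = x(ey)\<close> and \<open>\<diamond>\<close> to be commutative;
  mediality then follows by rewriting \<open>(xy)(zw)\<close> as \<open>(xy) \<diamond> (wz)\<close> and interchanging.
  (b) Interchanging \<open>\<star>\<close> with the group operation \<open>\<circ>\<close> shows \<open>x \<star> x = e\<close>, \<open>r = e\<close>
  and \<open>x \<star> y = x \<circ> (e \<star> y)\<close>; then \<open>e \<star> y\<close> is the \<open>\<circ>\<close>-inverse of \<open>y\<close>, i.e. \<open>ey\<close>,
  whence \<open>x \<star> y = x(e(ey)) = xy\<close>.
\<close>

locale ward =
  fixes dot :: "'a \<Rightarrow> 'a \<Rightarrow> 'a" (infixl "\<cdot>" 70) and e :: 'a
  assumes ward_quasigroup: "ward_quasigroup (\<cdot>)"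
    and square_eq: "x \<cdot> x = e"
begin

abbreviation circ :: "'a \<Rightarrow> 'a \<Rightarrow> 'a" (infixl "\<circ>\<^sub>e" 70) where
  "x \<circ>\<^sub>e y \<equiv> ret (\<cdot>) e x y"

lemma ward_law: "(x \<cdot> z) \<cdot> (y \<cdot> z) = x \<cdot> y"
  using ward_quasigroup unfolding ward_quasigroup_def by blast

lemma left_cancel: "a \<cdot> x = a \<cdot> y \<Longrightarrow> x = y"
  using ward_quasigroup unfolding ward_quasigroup_def quasigroup_def by blast

lemma ex_product: "\<exists>x z. a = x \<cdot> z"
  using ward_quasigroup unfolding ward_quasigroup_def quasigroup_def by metis

lemma right_unit [simp]: "a \<cdot> e = a"
proof -
  obtain x z where "a = x \<cdot> z" using ex_product by blast
  then show ?thesis using ward_law[of x z z] by (simp add: square_eq)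
qed

lemma e_mult_swap: "e \<cdot> (y \<cdot> x) = x \<cdot> y"
  using ward_law[of x x y] by (simp add: square_eq)

lemma e_mult_involutive [simp]: "e \<cdot> (e \<cdot> a) = a"
proof -
  obtain x z where "a = x \<cdot> z" using ex_product by blast
  then show ?thesis by (simp add: e_mult_swap)
qed

lemma ret_right_unit [simp]: "a \<circ>\<^sub>e e = a"
  by (simp add: ret_def square_eq)

lemma ret_left_unit [simp]: "e \<circ>\<^sub>e a = a"
  by (simp add: ret_def)

lemma ret_right_inverse: "a \<circ>\<^sub>e (e \<cdot> a) = e"
  by (simp add: ret_def square_eq)

lemma ret_left_cancel: "a \<circ>\<^sub>e b = a \<circ>\<^sub>e c \<Longrightarrow> b = c"
  unfolding ret_def by (metis left_cancel e_mult_involutive)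

context
  fixes diam :: "'a \<Rightarrow> 'a \<Rightarrow> 'a" (infixl "\<diamond>" 70) and u :: 'a
  assumes interchange: "double_magma (\<cdot>) (\<diamond>)"
    and unit_left: "u \<diamond> x = x" and unit_right: "x \<diamond> u = x"
begin

lemma diam_interchange: "(x \<cdot> y) \<diamond> (z \<cdot> w) = (x \<diamond> z) \<cdot> (y \<diamond> w)"
  using interchange unfolding double_magma_def by blast

lemma diam_left_unit_e [simp]: "e \<diamond> a = a"
proof -
  obtain z w where a: "a = z \<cdot> w" using ex_product by blast
  have "e \<diamond> (z \<cdot> w) = (u \<cdot> u) \<diamond> (z \<cdot> w)" by (simp add: square_eq)
  also have "\<dots> = (u \<diamond> z) \<cdot> (u \<diamond> w)" by (rule diam_interchange)
  also have "\<dots> = z \<cdot> w" by (simp only: unit_left)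
  finally show ?thesis unfolding a .
qed

lemma diam_unit_eq_e: "u = e"
  using diam_left_unit_e[of u] unit_right[of e] by simp

lemma diam_right_unit_e [simp]: "a \<diamond> e = a"
  using unit_right[of a] unfolding diam_unit_eq_e .

lemma diam_eq_ret: "x \<diamond> y = x \<circ>\<^sub>e y"
proof -
  have "x \<diamond> y = (x \<cdot> e) \<diamond> (e \<cdot> (e \<cdot> y))" by simp
  also have "\<dots> = (x \<diamond> e) \<cdot> (e \<diamond> (e \<cdot> y))" by (rule diam_interchange)
  finally show ?thesis by (simp add: ret_def)
qed

lemma diam_commute: "a \<diamond> b = b \<diamond> a"
proof -
  have "a \<diamond> b = (e \<cdot> (e \<cdot> a)) \<diamond> (b \<cdot> e)" by simp
  also have "\<dots> = (e \<diamond> b) \<cdot> ((e \<cdot> a) \<diamond> e)" by (rule diam_interchange)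
  also have "\<dots> = b \<diamond> a" by (simp add: diam_eq_ret ret_def)
  finally show ?thesis .
qed

lemma diam_mult_flip: "p \<cdot> (q \<cdot> q') = p \<diamond> (q' \<cdot> q)"
  by (simp add: diam_eq_ret ret_def e_mult_swap)

lemma medial_of_unital_interchange: "medial (\<cdot>)"
  unfolding medial_def
proof (intro allI)
  fix x y z w
  have "(x \<cdot> y) \<cdot> (z \<cdot> w) = (x \<cdot> y) \<diamond> (w \<cdot> z)" by (rule diam_mult_flip)
  also have "\<dots> = (x \<diamond> w) \<cdot> (y \<diamond> z)" by (rule diam_interchange)
  also have "\<dots> = (x \<diamond> w) \<cdot> (z \<diamond> y)" by (simp only: diam_commute[of y z])
  also have "\<dots> = (x \<cdot> z) \<diamond> (w \<cdot> y)" by (rule diam_interchange[symmetric])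
  also have "\<dots> = (x \<cdot> z) \<cdot> (y \<cdot> w)" by (rule diam_mult_flip[symmetric])
  finally show "(x \<cdot> y) \<cdot> (z \<cdot> w) = (x \<cdot> z) \<cdot> (y \<cdot> w)" .
qed

end

context
  fixes star :: "'a \<Rightarrow> 'a \<Rightarrow> 'a" (infixl "\<star>" 70) and r :: 'a
  assumes interchange: "double_magma (\<circ>\<^sub>e) (\<star>)"
    and star_left_cancel: "left_cancellative (\<star>)"
    and star_unipotent: "unipotent (\<star>)"
    and right_unit_r: "x \<star> r = x"
begin

lemma star_interchange: "(x \<circ>\<^sub>e y) \<star> (z \<circ>\<^sub>e w) = (x \<star> z) \<circ>\<^sub>e (y \<star> w)"
  using interchange unfolding double_magma_def by blast

lemma star_self_eq_e: "x \<star> x = e"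
proof -
  have "(e \<star> e) \<circ>\<^sub>e e = (e \<circ>\<^sub>e e) \<star> (e \<circ>\<^sub>e e)" by simp
  also have "\<dots> = (e \<star> e) \<circ>\<^sub>e (e \<star> e)" by (rule star_interchange)
  finally have "e \<star> e = e" by (rule ret_left_cancel[symmetric])
  then show ?thesis using star_unipotent unfolding unipotent_def by metis
qed

lemma star_right_unit_eq_e: "r = e"
proof -
  have "e \<star> (r \<circ>\<^sub>e r) = (e \<circ>\<^sub>e e) \<star> (r \<circ>\<^sub>e r)" by simp
  also have "\<dots> = (e \<star> r) \<circ>\<^sub>e (e \<star> r)" by (rule star_interchange)
  also have "\<dots> = e \<star> r" by (simp only: right_unit_r ret_left_unit)
  finally have "r \<circ>\<^sub>e r = r \<circ>\<^sub>e e"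
    using star_left_cancel unfolding left_cancellative_def by simp
  then show ?thesis by (rule ret_left_cancel)
qed

lemma star_right_unit_e: "x \<star> e = x"
  using right_unit_r[of x] unfolding star_right_unit_eq_e .

lemma star_eq_ret_star_e: "x \<star> w = x \<circ>\<^sub>e (e \<star> w)"
proof -
  have "x \<star> w = (x \<circ>\<^sub>e e) \<star> (e \<circ>\<^sub>e w)" by simp
  also have "\<dots> = (x \<star> e) \<circ>\<^sub>e (e \<star> w)" by (rule star_interchange)
  finally show ?thesis unfolding star_right_unit_e .
qed

lemma star_e_eq_mult_e: "e \<star> w = e \<cdot> w"
proof (rule ret_left_cancel)
  have "w \<circ>\<^sub>e (e \<star> w) = w \<star> w" by (rule star_eq_ret_star_e[symmetric])
  also have "\<dots> = e" by (rule star_self_eq_e)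
  also have "\<dots> = w \<circ>\<^sub>e (e \<cdot> w)" by (rule ret_right_inverse[symmetric])
  finally show "w \<circ>\<^sub>e (e \<star> w) = w \<circ>\<^sub>e (e \<cdot> w)" .
qed

lemma star_eq_mult: "x \<star> y = x \<cdot> y"
  unfolding star_eq_ret_star_e[of x y] star_e_eq_mult_e by (simp add: ret_def)

end

end

theorem theorem3p5:
  fixes dot :: "'a \<Rightarrow> 'a \<Rightarrow> 'a" and e :: 'a
  assumes ward: "ward_quasigroup dot"
    and e_def: "\<forall>x. dot x x = e"
  shows "(\<forall>(diam :: 'a \<Rightarrow> 'a \<Rightarrow> 'a) u.
            double_magma dot diam \<and> (\<forall>x. diam u x = x \<and> diam x u = x)
            \<longrightarrow> (\<forall>x y. diam x y = ret dot e x y) \<and> medial dot)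
       \<and> (\<forall>(star :: 'a \<Rightarrow> 'a \<Rightarrow> 'a) r.
            medial dot \<and> double_magma (ret dot e) star \<and> left_cancellative star
            \<and> unipotent star \<and> (\<forall>x. star x r = x)
            \<longrightarrow> (\<forall>x y. star x y = dot x y))"
proof -
  interpret ward dot e
    using ward e_def by unfold_locales blast+
  show ?thesis
  proof (intro conjI allI impI)
    fix diam :: "'a \<Rightarrow> 'a \<Rightarrow> 'a" and u x y
    assume "double_magma dot diam \<and> (\<forall>x. diam u x = x \<and> diam x u = x)"
    then have "double_magma dot diam" "\<And>x. diam u x = x" "\<And>x. diam x u = x" by auto
    then show "diam x y = ret dot e x y" and "medial dot"
      by (rule diam_eq_ret, rule medial_of_unital_interchange)
  next
    fix star :: "'a \<Rightarrow> 'a \<Rightarrow> 'a" and r x y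
    assume "medial dot \<and> double_magma (ret dot e) star \<and> left_cancellative star
            \<and> unipotent star \<and> (\<forall>x. star x r = x)"
    then have "double_magma (ret dot e) star" "left_cancellative star" "unipotent star"
      "\<And>x. star x r = x" by auto
    then show "star x y = dot x y" by (rule star_eq_mult)
  qed
qed

end
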